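(* Let $c_1,\dots,c_t$ and $d_1,\dots,d_r$ be block columns in $C_n^*$ such that every $c_i$ consists only of unbarred letters, every $d_j$ consists only of barred letters, and $w=c_1\cdots c_t\,d_1\cdots d_r$ is a column. Let $x_i$ be the largest (rightmost) letter of $c_i$ and let $\overline{y_j}$ be the smallest (leftmost) letter of $d_j$. Then $w$ is admissible if and only if $N_z(w)\le z$ for every $z\in\{x_1,\dots,x_t,y_1,\dots,y_r\}$.
   Context: Fix $n\ge 1$ and the totally ordered alphabet $C_n=\{1<2<\cdots<n<\overline{n}<\overline{n-1}<\cdots<\overline{1}\}$; letters $1,\dots,n$ are unbarred, $\overline 1,\dots,\overline n$ barred. $C_n^*$ is the free monoid of words on $C_n$. A column is a word $x_1\cdots x_k$ with $x_1<x_2<\cdots<x_k$. For a column $u$ and $z\in\{1,\dots,n\}$, $N_z(u)$ is the number of letters $x$ of $u$ with $x\le z$ or $x\ge \overline z$. A column $u$ is admissible if it is nonempty and $N_z(u)\le z$ for all $z=1,\dots,n$. A block column is a column $x_1\cdots x_k$ in which each $x_{i+1}$ is the immediate successor of $x_i$ in the total order of $C_n$. *)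

theory Defs
  imports Main
begin

text \<open>Letters of the alphabet C_n: Unb i stands for the unbarred letter i,
  Bar i for the barred letter (overline i). A letter belongs to C_n iff its index is in {1..n}.\<close>
datatype letter = Unb nat | Bar nat

fun idx :: "letter \<Rightarrow> nat" where
  "idx (Unb i) = i"
| "idx (Bar i) = i"

fun is_barred :: "letter \<Rightarrow> bool" where
  "is_barred (Unb i) = False"
| "is_barred (Bar i) = True"

instantiation letter :: linorder
begin
fun less_eq_letter :: "letter \<Rightarrow> letter \<Rightarrow> bool" where
  "less_eq_letter (Unb i) (Unb j) = (i \<le> j)"
| "less_eq_letter (Unb i) (Bar j) = True"
| "less_eq_letter (Bar i) (Unb j) = False"
| "less_eq_letter (Bar i) (Bar j) = (j \<le> i)"
definition less_letter :: "letter \<Rightarrow> letter \<Rightarrow> bool" where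
  "less_letter x y = (x \<le> y \<and> \<not> y \<le> x)"
instance
proof
  fix x y z :: letter
  show "(x < y) = (x \<le> y \<and> \<not> y \<le> x)" by (simp add: less_letter_def)
  show "x \<le> x" by (cases x) auto
  show "x \<le> y \<Longrightarrow> y \<le> z \<Longrightarrow> x \<le> z" by (cases x; cases y; cases z) auto
  show "x \<le> y \<Longrightarrow> y \<le> x \<Longrightarrow> x = y" by (cases x; cases y) auto
  show "x \<le> y \<or> y \<le> x" by (cases x; cases y) auto
qed
end

definition in_Cn :: "nat \<Rightarrow> letter \<Rightarrow> bool" where
  "in_Cn n x = (1 \<le> idx x \<and> idx x \<le> n)"

definition is_column :: "nat \<Rightarrow> letter list \<Rightarrow> bool" where
  "is_column n u = ((\<forall>x\<in>set u. in_Cn n x) \<and> sorted_wrt (<) u)"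

definition imm_succ :: "nat \<Rightarrow> letter \<Rightarrow> letter \<Rightarrow> bool" where
  "imm_succ n a b = (in_Cn n a \<and> in_Cn n b \<and> a < b \<and> \<not> (\<exists>c. in_Cn n c \<and> a < c \<and> c < b))"

definition is_block_column :: "nat \<Rightarrow> letter list \<Rightarrow> bool" where
  "is_block_column n u = (is_column n u \<and> (\<forall>i. Suc i < length u \<longrightarrow> imm_succ n (u ! i) (u ! Suc i)))"

definition Nz :: "nat \<Rightarrow> letter list \<Rightarrow> nat" where
  "Nz z u = length (filter (\<lambda>x. x \<le> Unb z \<or> Bar z \<le> x) u)"

definition admissible :: "nat \<Rightarrow> letter list \<Rightarrow> bool" where
  "admissible n u = (is_column n u \<and> u \<noteq> [] \<and> (\<forall>z\<in>{1..n}. Nz z u \<le> z))"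

end

theory Submission
  imports Defs
begin

text \<open>Passing from N_{k-1}(w) to N_k(w) adds exactly the letters k and bar k. So an excess
  N_z(w) > z at an index z not occurring in w is already an excess at z - 1, while along a run
  z, z+1, ..., e of indices all occurring in w the excess N_z(w) - z cannot decrease. In w every
  occurring index lies in some block column, whose indices form an interval with upper end some
  x_i or y_j. By induction on z, an excess anywhere thus yields one at some x_i or y_j; it cannot
  descend to 0 since N_0(w) = 0.\<close>

lemma Nz_Suc:
  "Nz (Suc k) w = Nz k w + length (filter (\<lambda>x. idx x = Suc k) w)"
proof (induction w)
  case Nil
  then show ?case by (simp add: Nz_def)
next
  case (Cons x w)
  then show ?case by (cases x) (auto simp: Nz_def)
qed

lemma Nz_Suc_eq:
  assumes "Suc k \<notin> idx ` set w"
  shows "Nz (Suc k) w = Nz k w"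
  using assms by (force simp: Nz_Suc filter_empty_conv)

lemma Nz_Suc_gt:
  assumes "Suc k \<in> idx ` set w"
  shows "Nz k w < Nz (Suc k) w"
proof -
  have "filter (\<lambda>x. idx x = Suc k) w \<noteq> []"
    using assms by (auto simp: filter_empty_conv)
  then show ?thesis by (simp add: Nz_Suc)
qed

lemma Nz_0:
  assumes "0 \<notin> idx ` set w"
  shows "Nz 0 w = 0"
proof -
  have "\<not> (x \<le> Unb 0 \<or> Bar 0 \<le> x)" if "x \<in> set w" for x
    using assms that by (cases x) force+
  then show ?thesis by (simp add: Nz_def filter_empty_conv)
qed

lemma Nz_add_le_on_run:
  assumes "a \<le> b" and "{a<..b} \<subseteq> idx ` set w"
  shows "Nz a w + (b - a) \<le> Nz b w"
  using assms
proof (induction b rule: dec_induct)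
  case base
  then show ?case by simp
next
  case (step b)
  have "{a<..b} \<subseteq> idx ` set w"
    using step.prems by auto
  then have "Nz a w + (b - a) \<le> Nz b w"
    using step.IH by blast
  moreover have "Nz b w < Nz (Suc b) w"
    using step.prems step.hyps(1) by (intro Nz_Suc_gt) auto
  ultimately show ?case
    using step.hyps(1) by simp
qed

lemma Nz_excess_at_run_end:
  assumes "0 \<notin> idx ` set w"
    and runs: "\<And>k. k \<in> idx ` set w \<Longrightarrow> \<exists>e\<in>E. k \<le> e \<and> {k..e} \<subseteq> idx ` set w"
    and "z < Nz z w"
  shows "\<exists>e\<in>E. e < Nz e w"
  using assms(3)
proof (induction z)
  case 0
  then show ?case using Nz_0[OF assms(1)] by simp
next
  case (Suc z)
  show ?case
  proof (cases "Suc z \<in> idx ` set w")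
    case True
    then obtain e where e: "e \<in> E" "Suc z \<le> e" "{Suc z..e} \<subseteq> idx ` set w"
      using runs by blast
    then have "Nz (Suc z) w + (e - Suc z) \<le> Nz e w"
      by (intro Nz_add_le_on_run) auto
    then show ?thesis
      using e Suc.prems by (intro bexI[of _ e]) auto
  next
    case False
    then show ?thesis
      using Suc by (simp add: Nz_Suc_eq)
  qed
qed

lemma imm_succ_Unb_unbarred:
  assumes "imm_succ n (Unb a) y" and "\<not> is_barred y"
  shows "y = Unb (Suc a)"
proof -
  obtain b where y: "y = Unb b"
    using assms(2) by (cases y) auto
  have ab: "a < b" "b \<le> n" "1 \<le> a"
    using assms(1) y by (auto simp: imm_succ_def in_Cn_def less_letter_def)
  show ?thesis
  proof (rule ccontr)
    assume "y \<noteq> Unb (Suc a)"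
    then have "in_Cn n (Unb (Suc a)) \<and> Unb a < Unb (Suc a) \<and> Unb (Suc a) < y"
      using ab y by (auto simp: in_Cn_def less_letter_def)
    then show False
      using assms(1) by (auto simp: imm_succ_def)
  qed
qed

lemma imm_succ_Bar:
  assumes "imm_succ n (Bar a) y"
  shows "y = Bar (a - 1)"
proof -
  have "\<not> y \<le> Bar a"
    using assms by (auto simp: imm_succ_def less_letter_def)
  then obtain b where y: "y = Bar b"
    by (cases y) auto
  have ab: "b < a" "1 \<le> b" "a \<le> n"
    using assms y by (auto simp: imm_succ_def in_Cn_def less_letter_def)
  show ?thesis
  proof (rule ccontr)
    assume "y \<noteq> Bar (a - 1)"
    then have "in_Cn n (Bar (a - 1)) \<and> Bar a < Bar (a - 1) \<and> Bar (a - 1) < y"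
      using ab y by (auto simp: in_Cn_def less_letter_def)
    then show False
      using assms by (auto simp: imm_succ_def)
  qed
qed

lemma unbarred_block_column_nth:
  assumes "c \<noteq> []" "is_block_column n c" "\<forall>x\<in>set c. \<not> is_barred x" "i < length c"
  shows "c ! i = Unb (idx (hd c) + i)"
  using assms(4)
proof (induction i)
  case 0
  have "\<not> is_barred (hd c)"
    using assms(1,3) by simp
  then show ?case
    using assms(1) by (cases "hd c") (auto simp: hd_conv_nth)
next
  case (Suc i)
  have "imm_succ n (c ! i) (c ! Suc i)"
    using assms(2) Suc.prems by (auto simp: is_block_column_def)
  then show ?case
    using Suc assms(3) imm_succ_Unb_unbarred by auto
qed

lemma barred_block_column_nth:
  assumes "d \<noteq> []" "is_block_column n d" "\<forall>x\<in>set d. is_barred x" "i < length d"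
  shows "d ! i = Bar (idx (hd d) - i)"
  using assms(4)
proof (induction i)
  case 0
  have "is_barred (hd d)"
    using assms(1,3) by simp
  then show ?case
    using assms(1) by (cases "hd d") (auto simp: hd_conv_nth)
next
  case (Suc i)
  have "imm_succ n (d ! i) (d ! Suc i)"
    using assms(2) Suc.prems by (auto simp: is_block_column_def)
  then have "d ! Suc i = Bar (idx (hd d) - i - 1)"
    using Suc imm_succ_Bar[of n "idx (hd d) - i"] by simp
  then show ?case
    by simp
qed

lemma Unb_in_unbarred_block_column_iff:
  assumes "c \<noteq> []" "is_block_column n c" "\<forall>x\<in>set c. \<not> is_barred x"
  shows "Unb k \<in> set c \<longleftrightarrow> idx (hd c) \<le> k \<and> k \<le> idx (last c)"
proof -
  note nth = unbarred_block_column_nth[OF assms]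
  have "idx (last c) = idx (hd c) + (length c - 1)"
    using assms(1) nth[of "length c - 1"] by (simp add: last_conv_nth)
  moreover have "Unb k \<in> set c \<longleftrightarrow> (\<exists>i < length c. k = idx (hd c) + i)"
    by (auto simp: in_set_conv_nth nth)
  moreover have "0 < length c"
    using assms(1) by simp
  ultimately show ?thesis
    by (auto intro!: exI[of _ "k - idx (hd c)"])
qed

lemma Bar_in_barred_block_column_iff:
  assumes "d \<noteq> []" "is_block_column n d" "\<forall>x\<in>set d. is_barred x"
  shows "Bar k \<in> set d \<longleftrightarrow> idx (last d) \<le> k \<and> k \<le> idx (hd d)"
proof -
  note nth = barred_block_column_nth[OF assms]
  have last: "last d = Bar (idx (hd d) - (length d - 1))"
    using assms(1) nth[of "length d - 1"] by (simp add: last_conv_nth)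
  then have "1 \<le> idx (hd d) - (length d - 1)"
    using assms(1,2) last_in_set
    by (fastforce simp: is_block_column_def is_column_def in_Cn_def)
  moreover have "Bar k \<in> set d \<longleftrightarrow> (\<exists>i < length d. k = idx (hd d) - i)"
    by (auto simp: in_set_conv_nth nth)
  moreover have "0 < length d"
    using assms(1) by simp
  ultimately have "Bar k \<in> set d \<longleftrightarrow> idx (hd d) - (length d - 1) \<le> k \<and> k \<le> idx (hd d)"
    by (auto intro!: exI[of _ "idx (hd d) - k"])
  then show ?thesis
    using last by simp
qed

lemma block_columns_runs:
  assumes cs: "\<forall>c\<in>set cs. c \<noteq> [] \<and> is_block_column n c \<and> (\<forall>x\<in>set c. \<not> is_barred x)"
    and ds: "\<forall>d\<in>set ds. d \<noteq> [] \<and> is_block_column n d \<and> (\<forall>x\<in>set d. is_barred x)"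
    and "k \<in> idx ` set (concat cs @ concat ds)"
  shows "\<exists>e \<in> (idx \<circ> last) ` set cs \<union> (idx \<circ> hd) ` set ds.
           k \<le> e \<and> {k..e} \<subseteq> idx ` set (concat cs @ concat ds)"
proof -
  consider c where "c \<in> set cs" "Unb k \<in> set c" | d where "d \<in> set ds" "Bar k \<in> set d"
  proof -
    obtain x where x: "x \<in> set (concat cs @ concat ds)" "k = idx x"
      using assms(3) by blast
    show thesis
    proof (cases x)
      case (Unb i)
      then show thesis
        using x cs ds that(1) by fastforce
    next
      case (Bar i)
      then show thesis
        using x cs ds that(2) by fastforce
    qed
  qed
  then show ?thesis
  proof cases
    case 1
    have c: "c \<noteq> []" "is_block_column n c" "\<forall>x\<in>set c. \<not> is_barred x"
      using cs 1(1) by auto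
    note iff = Unb_in_unbarred_block_column_iff[OF c]
    have "{k..idx (last c)} \<subseteq> idx ` set c"
    proof
      fix j assume "j \<in> {k..idx (last c)}"
      then have "Unb j \<in> set c"
        using 1(2) iff by auto
      then show "j \<in> idx ` set c"
        by (metis idx.simps(1) image_eqI)
    qed
    moreover have "k \<le> idx (last c)"
      using 1(2) iff by blast
    moreover have "idx ` set c \<subseteq> idx ` set (concat cs @ concat ds)"
      using 1(1) by auto
    ultimately show ?thesis
      using 1(1) by (intro bexI[of _ "idx (last c)"]) auto
  next
    case 2
    have d: "d \<noteq> []" "is_block_column n d" "\<forall>x\<in>set d. is_barred x"
      using ds 2(1) by auto
    note iff = Bar_in_barred_block_column_iff[OF d]
    have "{k..idx (hd d)} \<subseteq> idx ` set d"
    proof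
      fix j assume "j \<in> {k..idx (hd d)}"
      then have "Bar j \<in> set d"
        using 2(2) iff by auto
      then show "j \<in> idx ` set d"
        by (metis idx.simps(2) image_eqI)
    qed
    moreover have "k \<le> idx (hd d)"
      using 2(2) iff by blast
    moreover have "idx ` set d \<subseteq> idx ` set (concat cs @ concat ds)"
      using 2(1) by auto
    ultimately show ?thesis
      using 2(1) by (intro bexI[of _ "idx (hd d)"]) auto
  qed
qed

theorem proposition2p1:
  fixes n :: nat and cs ds :: "letter list list"
  assumes "n \<ge> 1"
    and "\<forall>c\<in>set cs. c \<noteq> [] \<and> is_block_column n c \<and> (\<forall>x\<in>set c. \<not> is_barred x)"
    and "\<forall>d\<in>set ds. d \<noteq> [] \<and> is_block_column n d \<and> (\<forall>x\<in>set d. is_barred x)"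
    and "is_column n (concat cs @ concat ds)"
    and "concat cs @ concat ds \<noteq> []"
  shows "admissible n (concat cs @ concat ds) \<longleftrightarrow>
    (\<forall>z \<in> (idx \<circ> last) ` set cs \<union> (idx \<circ> hd) ` set ds.
        Nz z (concat cs @ concat ds) \<le> z)"
proof -
  let ?w = "concat cs @ concat ds"
  let ?E = "(idx \<circ> last) ` set cs \<union> (idx \<circ> hd) ` set ds"
  have letters: "idx ` set ?w \<subseteq> {1..n}"
    using assms(4) by (auto simp: is_column_def in_Cn_def)
  have "?E \<subseteq> idx ` set ?w"
    using assms(2,3) by (force intro: last_in_set hd_in_set)
  then have "?E \<subseteq> {1..n}"
    using letters by blast
  moreover have "Nz z ?w \<le> z" if "\<forall>e\<in>?E. Nz e ?w \<le> e" for z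
  proof (rule ccontr)
    have "0 \<notin> idx ` set ?w"
      using letters by (metis atLeastAtMost_iff not_one_le_zero subsetD)
    moreover assume "\<not> Nz z ?w \<le> z"
    ultimately have "\<exists>e\<in>?E. e < Nz e ?w"
      using Nz_excess_at_run_end block_columns_runs[OF assms(2,3)] not_le by metis
    then show False
      using that by (meson not_le)
  qed
  ultimately show ?thesis
    using assms(4,5) by (auto simp: admissible_def)
qed

end
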